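(* Let $\Gamma$ and $\Gamma'$ be two paths in $B(\mathfrak S_n)$ belonging to the same flipclass. Then: the groups $W(\Gamma)$ and $W(\Gamma')$ coincide; the vertex sets of $G(\Gamma)$ and $G(\Gamma')$ coincide; and $G(\Gamma)$ and $G(\Gamma')$ have the same number of connected components.
   Context: $\mathfrak S_n$ is the symmetric group on $[n]$, $T$ its transpositions, $\ell$ the length w.r.t. simple transpositions. The Bruhat graph $B(\mathfrak S_n)$ has an edge $x\xrightarrow{t}y$ iff $yx^{-1}=t\in T$ and $\ell(x)<\ell(y)$; $P_h(u,v)$ is the set of paths $u=x_0\to\cdots\to x_h=v$ of length $h$. Between two fixed vertices there are $0$ or $2$ paths of length $2$, each the flip of the other; the $i$-th flip operator $f_i$ ($i\in[h-1]$) on $P_h(u,v)$ replaces $x_{i-1}\to x_i\to x_{i+1}$ by its flip; flipclasses are the orbits of $\langle f_1,\dots,f_{h-1}\rangle$ on $P_h(u,v)$. For a path $\Gamma=(x_0\xrightarrow{t_1}x_1\xrightarrow{t_2}\cdots\xrightarrow{t_h}x_h)$, $W(\Gamma)$ is the subgroup of $\mathfrak S_n$ generated by $t_1,\dots,t_h$, and $G(\Gamma)$ is the edge-labelled undirected multigraph with vertex set $\{a\in[n]: t_i(a)\ne a\text{ for some }i\in[h]\}$ and an edge labelled $i$ between $a$ and $b$ whenever $t_i=(a,b)$. *)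

theory Defs
  imports "HOL-Algebra.Sym_Groups" "HOL-Algebra.Generated_Groups"
begin

text \<open>Elements of the symmetric group S_n: permutations of {1..n}, as functions nat => nat
  (the carrier of sym_group n).  Products are compositions: x y = x \<circ> y.\<close>

definition simple_transpositions :: "nat \<Rightarrow> (nat \<Rightarrow> nat) set" where
  "simple_transpositions n = {Transposition.transpose i (i + 1) | i. 1 \<le> i \<and> i < n}"

definition perm_length :: "nat \<Rightarrow> (nat \<Rightarrow> nat) \<Rightarrow> nat" where
  "perm_length n x = (LEAST k. \<exists>ws. length ws = k \<and> set ws \<subseteq> simple_transpositions n
                                 \<and> x = foldr (\<circ>) ws id)"

definition transpositions :: "nat \<Rightarrow> (nat \<Rightarrow> nat) set" where
  "transpositions n = {Transposition.transpose a b | a b. a \<in> {1..n} \<and> b \<in> {1..n} \<and> a \<noteq> b}"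

definition bruhat_edge :: "nat \<Rightarrow> (nat \<Rightarrow> nat) \<Rightarrow> (nat \<Rightarrow> nat) \<Rightarrow> bool" where
  "bruhat_edge n x y \<longleftrightarrow> x permutes {1..n} \<and> y permutes {1..n}
     \<and> y \<circ> inv' x \<in> transpositions n \<and> perm_length n x < perm_length n y"

text \<open>A path x_0 -> ... -> x_h, represented by the list [x_0, ..., x_h] of its vertices.
  It lies in P_h(u,v) with h = length - 1, u = hd, v = last.\<close>
definition bruhat_path :: "nat \<Rightarrow> (nat \<Rightarrow> nat) list \<Rightarrow> bool" where
  "bruhat_path n xs \<longleftrightarrow> xs \<noteq> [] \<and> (\<forall>i. i + 1 < length xs \<longrightarrow> bruhat_edge n (xs ! i) (xs ! (i + 1)))"

definition path_labels :: "(nat \<Rightarrow> nat) list \<Rightarrow> (nat \<Rightarrow> nat) list" where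
  "path_labels xs = map (\<lambda>i. xs ! (i + 1) \<circ> inv' (xs ! i)) [0..<length xs - 1]"

text \<open>Flip operator f_i (1 <= i <= h-1): ys = f_i xs iff ys is the path obtained by replacing
  x_{i-1} -> x_i -> x_{i+1} by the other length-2 path between x_{i-1} and x_{i+1}
  (there are exactly two such paths).\<close>
definition flip_at :: "nat \<Rightarrow> nat \<Rightarrow> (nat \<Rightarrow> nat) list \<Rightarrow> (nat \<Rightarrow> nat) list \<Rightarrow> bool" where
  "flip_at n i xs ys \<longleftrightarrow> bruhat_path n xs \<and> 1 \<le> i \<and> i + 1 < length xs
     \<and> (\<exists>y. y \<noteq> xs ! i \<and> ys = xs[i := y]) \<and> bruhat_path n ys"

definition flip_step :: "nat \<Rightarrow> (nat \<Rightarrow> nat) list \<Rightarrow> (nat \<Rightarrow> nat) list \<Rightarrow> bool" where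
  "flip_step n xs ys \<longleftrightarrow> (\<exists>i. flip_at n i xs ys)"

text \<open>Same flipclass: same orbit of the group generated by the flip operators
  (involutions), i.e. related by a finite sequence of flips.\<close>
definition same_flipclass :: "nat \<Rightarrow> (nat \<Rightarrow> nat) list \<Rightarrow> (nat \<Rightarrow> nat) list \<Rightarrow> bool" where
  "same_flipclass n xs ys \<longleftrightarrow> bruhat_path n xs \<and> (flip_step n)\<^sup>*\<^sup>* xs ys"

definition W_group :: "nat \<Rightarrow> (nat \<Rightarrow> nat) list \<Rightarrow> (nat \<Rightarrow> nat) set" where
  "W_group n xs = generate (sym_group n) (set (path_labels xs))"

text \<open>G(Gamma): vertices and (undirected, labelled multi-) edges.\<close>
definition G_vertices :: "nat \<Rightarrow> (nat \<Rightarrow> nat) list \<Rightarrow> nat set" where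
  "G_vertices n xs = {a \<in> {1..n}. \<exists>t \<in> set (path_labels xs). t a \<noteq> a}"

definition G_edges :: "(nat \<Rightarrow> nat) list \<Rightarrow> (nat \<times> nat \<times> nat) set" where
  "G_edges xs = {(a, i, b) | a i b. 1 \<le> i \<and> i \<le> length (path_labels xs) \<and> a \<noteq> b
                  \<and> path_labels xs ! (i - 1) = Transposition.transpose a b}"

definition G_adj :: "(nat \<Rightarrow> nat) list \<Rightarrow> (nat \<times> nat) set" where
  "G_adj xs = {(a, b). \<exists>i. (a, i, b) \<in> G_edges xs}"

definition G_components :: "nat \<Rightarrow> (nat \<Rightarrow> nat) list \<Rightarrow> nat set set" where
  "G_components n xs = (\<lambda>a. (G_adj xs)\<^sup>* `` {a} \<inter> G_vertices n xs) ` G_vertices n xs"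

definition G_num_components :: "nat \<Rightarrow> (nat \<Rightarrow> nat) list \<Rightarrow> nat" where
  "G_num_components n xs = card (G_components n xs)"

end

theory Submission
  imports Defs
begin

text \<open>
  A flip replaces two consecutive labels t, t' of a path by labels s, s' with s' s = t' t,
  both products being x_(i+1) x_(i-1)^-1; moreover t and t' are distinct, since otherwise
  x_(i+1) = x_(i-1) although lengths strictly increase along a path. A product of two
  distinct transpositions factors into transpositions only through t and t' themselves or,
  when t and t' share a point, through the third transposition t t' t on their three points.
  Hence the new labels lie in the triangle closure of the old ones: they generate nothing
  new, move no new points and join no new components of G. Flips are involutions, so all
  three invariants are equal.
\<close>

definition triangle_closure :: "('a \<Rightarrow> 'a) set \<Rightarrow> ('a \<Rightarrow> 'a) set" where
  "triangle_closure L = L \<union> {transpose y z | x y z. x \<noteq> y \<and> x \<noteq> z \<and> y \<noteq> z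
      \<and> transpose x y \<in> L \<and> transpose x z \<in> L}"

lemma triangle_closure_mono: "L \<subseteq> M \<Longrightarrow> triangle_closure L \<subseteq> triangle_closure M"
  unfolding triangle_closure_def by blast

lemma transpose_in_triangle_closure:
  assumes "x \<noteq> y" "x \<noteq> z" "y \<noteq> z" "transpose x y \<in> L" "transpose x z \<in> L"
  shows "transpose y z \<in> triangle_closure L"
  using assms unfolding triangle_closure_def by blast

lemma transpose_right_factor_in_triangle_closure:
  fixes a b c d p q r s :: 'a
  assumes "transpose a b \<noteq> transpose c d" "a \<noteq> b" "c \<noteq> d" "p \<noteq> q"
    and eq: "transpose r s \<circ> transpose p q = transpose c d \<circ> transpose a b"
  shows "transpose p q \<in> triangle_closure {transpose a b, transpose c d}"
proof -
  have at: "\<And>x. transpose r s (transpose p q x) = transpose c d (transpose a b x)"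
    using eq by (metis comp_apply)
  have ne: "\<not> ((a = c \<and> b = d) \<or> (a = d \<and> b = c))"
    using assms(1) by (auto simp: transpose_commute)
  \<comment> \<open>evaluating both sides at the eight named points leaves only these possibilities\<close>
  have "(p = a \<and> q = b) \<or> (p = b \<and> q = a) \<or> (p = c \<and> q = d) \<or> (p = d \<and> q = c)
    \<or> (a = c \<and> ((p = b \<and> q = d) \<or> (p = d \<and> q = b)))
    \<or> (a = d \<and> ((p = b \<and> q = c) \<or> (p = c \<and> q = b)))
    \<or> (b = c \<and> ((p = a \<and> q = d) \<or> (p = d \<and> q = a)))
    \<or> (b = d \<and> ((p = a \<and> q = c) \<or> (p = c \<and> q = a)))"
    using at[of a] at[of b] at[of c] at[of d] at[of p] at[of q] at[of r] at[of s] ne assms(2-4)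
    unfolding transpose_def by smt
  then show ?thesis
    using ne assms(2,3) transpose_in_triangle_closure[of _ _ _ "{transpose a b, transpose c d}"]
    by (elim disjE conjE; simp add: triangle_closure_def transpose_commute; metis transpose_commute)
qed

lemma transpose_factors_in_triangle_closure:
  fixes a b c d p q r s :: 'a
  assumes "transpose a b \<noteq> transpose c d" "a \<noteq> b" "c \<noteq> d" "p \<noteq> q" "r \<noteq> s"
    and eq: "transpose r s \<circ> transpose p q = transpose c d \<circ> transpose a b"
  shows "{transpose p q, transpose r s} \<subseteq> triangle_closure {transpose a b, transpose c d}"
proof -
  have "transpose p q \<circ> transpose r s = transpose a b \<circ> transpose c d"
    using arg_cong[OF eq, of inv'] by (simp add: o_inv_distrib)
  then have "transpose r s \<in> triangle_closure {transpose c d, transpose a b}"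
    using assms(1-3,5) by (intro transpose_right_factor_in_triangle_closure) auto
  then show ?thesis
    using transpose_right_factor_in_triangle_closure[OF assms(1-4) eq] by (simp add: insert_commute)
qed

lemma triangle_closure_subset_generate:
  assumes "L \<subseteq> carrier (sym_group n)"
  shows "triangle_closure L \<subseteq> generate (sym_group n) L"
proof
  fix t assume "t \<in> triangle_closure L"
  then consider "t \<in> L"
    | x y z where "x \<noteq> y" "x \<noteq> z" "y \<noteq> z" "t = transpose y z"
        "transpose x y \<in> L" "transpose x z \<in> L"
    unfolding triangle_closure_def by blast
  then show "t \<in> generate (sym_group n) L"
  proof cases
    case 1
    then show ?thesis by (rule generate.incl)
  next
    case (2 x y z)
    have "transpose y x \<otimes>\<^bsub>sym_group n\<^esub> transpose x z \<otimes>\<^bsub>sym_group n\<^esub> transpose y x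
        \<in> generate (sym_group n) L"
      using 2 by (intro generate.eng generate.incl) (simp_all add: transpose_commute)
    then show ?thesis
      using 2 transpose_comp_triple[of y z x] by (simp add: sym_group_def)
  qed
qed

lemma generate_triangle_closure_subset:
  assumes "L \<subseteq> carrier (sym_group n)" "L' \<subseteq> triangle_closure L"
  shows "generate (sym_group n) L' \<subseteq> generate (sym_group n) L"
proof -
  interpret group "sym_group n" by (rule sym_group_is_group)
  show ?thesis
    using assms triangle_closure_subset_generate generate_is_subgroup
    by (meson generate_subgroup_incl order_trans)
qed

lemma triangle_closure_moved_point:
  assumes "t \<in> triangle_closure L" "t a \<noteq> a"
  shows "\<exists>t'\<in>L. t' a \<noteq> a"
  using assms unfolding triangle_closure_def
  by (auto simp: transpose_eq_iff) (metis transpose_apply_second)+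

definition transposition_graph :: "('a \<Rightarrow> 'a) set \<Rightarrow> ('a \<times> 'a) set" where
  "transposition_graph L = {(a, b). a \<noteq> b \<and> transpose a b \<in> L}"

lemma transposition_graph_mono: "L \<subseteq> M \<Longrightarrow> transposition_graph L \<subseteq> transposition_graph M"
  unfolding transposition_graph_def by blast

lemma transposition_graph_triangle_closure:
  "transposition_graph (triangle_closure L) \<subseteq> (transposition_graph L)\<^sup>*"
proof clarify
  fix a b assume "(a, b) \<in> transposition_graph (triangle_closure L)"
  then have "a \<noteq> b" "transpose a b \<in> triangle_closure L"
    unfolding transposition_graph_def by auto
  then consider "transpose a b \<in> L"
    | x where "x \<noteq> a" "x \<noteq> b" "transpose x a \<in> L" "transpose x b \<in> L"
    unfolding triangle_closure_def
    by (auto simp: fun_eq_iff transpose_eq_iff)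
  then show "(a, b) \<in> (transposition_graph L)\<^sup>*"
  proof cases
    case 1
    then show ?thesis using \<open>a \<noteq> b\<close> unfolding transposition_graph_def by auto
  next
    case (2 x)
    then have "(a, x) \<in> transposition_graph L" "(x, b) \<in> transposition_graph L"
      unfolding transposition_graph_def by (auto simp: transpose_commute)
    then show ?thesis by (meson converse_rtrancl_into_rtrancl r_into_rtrancl)
  qed
qed

lemma length_path_labels: "length (path_labels xs) = length xs - 1"
  by (simp add: path_labels_def)

lemma nth_path_labels: "j < length xs - 1 \<Longrightarrow> path_labels xs ! j = xs ! (j + 1) \<circ> inv' (xs ! j)"
  by (simp add: path_labels_def)

lemma set_path_labels: "set (path_labels xs) = {xs ! (j + 1) \<circ> inv' (xs ! j) | j. j < length xs - 1}"
  by (auto simp: path_labels_def)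

lemma set_path_labels_list_update:
  assumes "1 \<le> i" "i + 1 < length xs"
  shows "set (path_labels (xs[i := y]))
    \<subseteq> set (path_labels xs) \<union> {y \<circ> inv' (xs ! (i - 1)), xs ! (i + 1) \<circ> inv' y}"
proof -
  have "xs[i := y] ! (j + 1) \<circ> inv' (xs[i := y] ! j) \<in> {xs ! (j + 1) \<circ> inv' (xs ! j)}
      \<union> {y \<circ> inv' (xs ! (i - 1)), xs ! (i + 1) \<circ> inv' y}" if "j < length xs - 1" for j
    using assms that by (cases "j = i - 1"; cases "j = i") auto
  then show ?thesis unfolding set_path_labels by auto
qed

lemma G_adj_eq_transposition_graph: "G_adj xs = transposition_graph (set (path_labels xs))"
proof -
  have "(\<exists>i. 1 \<le> i \<and> i \<le> length ls \<and> ls ! (i - 1) = t) \<longleftrightarrow> t \<in> set ls"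
    for ls :: "(nat \<Rightarrow> nat) list" and t
  proof
    assume "\<exists>i. 1 \<le> i \<and> i \<le> length ls \<and> ls ! (i - 1) = t"
    then show "t \<in> set ls" by (metis One_nat_def Suc_le_eq Suc_pred nth_mem)
  next
    assume "t \<in> set ls"
    then show "\<exists>i. 1 \<le> i \<and> i \<le> length ls \<and> ls ! (i - 1) = t"
      by (metis in_set_conv_nth Suc_leI diff_Suc_1 le_add1 plus_1_eq_Suc)
  qed
  then show ?thesis
    unfolding G_adj_def G_edges_def transposition_graph_def by auto
qed

lemma path_labels_subset_transpositions:
  "bruhat_path n xs \<Longrightarrow> set (path_labels xs) \<subseteq> transpositions n"
  unfolding set_path_labels bruhat_path_def bruhat_edge_def by auto

lemma transpositions_subset_carrier: "transpositions n \<subseteq> carrier (sym_group n)"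
  unfolding transpositions_def sym_group_def by (auto intro: permutes_swap_id)

lemma comp_inv_comp_cancel: "B permutes S \<Longrightarrow> (C \<circ> inv' B) \<circ> (B \<circ> inv' A) = C \<circ> inv' A"
  by (metis comp_assoc comp_id permutes_inv_o(2))

lemma bruhat_edge_label: "bruhat_edge n x y \<Longrightarrow> y \<circ> inv' x \<in> transpositions n"
  unfolding bruhat_edge_def by blast

lemma bruhat_consecutive_labels_distinct:
  assumes AB: "bruhat_edge n A B" and BC: "bruhat_edge n B C"
  shows "B \<circ> inv' A \<noteq> C \<circ> inv' B"
proof
  assume same: "B \<circ> inv' A = C \<circ> inv' B"
  have "C \<circ> inv' A = (B \<circ> inv' A) \<circ> (B \<circ> inv' A)"
    using comp_inv_comp_cancel[of B "{1..n}" C A] AB same unfolding bruhat_edge_def by simp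
  also have "\<dots> = id"
    using bruhat_edge_label[OF AB] unfolding transpositions_def by auto
  finally have "C = A"
    using AB unfolding bruhat_edge_def by (metis comp_assoc comp_id id_comp permutes_inv_o(2))
  moreover have "perm_length n A < perm_length n C"
    using AB BC unfolding bruhat_edge_def by simp
  ultimately show False by simp
qed

lemma bruhat_square_labels_in_triangle_closure:
  assumes AB: "bruhat_edge n A B" and BC: "bruhat_edge n B C"
    and AY: "bruhat_edge n A Y" and YC: "bruhat_edge n Y C"
  shows "{Y \<circ> inv' A, C \<circ> inv' Y} \<subseteq> triangle_closure {B \<circ> inv' A, C \<circ> inv' B}"
proof -
  obtain a b c d p q r s where
    "B \<circ> inv' A = transpose a b" "a \<noteq> b" "C \<circ> inv' B = transpose c d" "c \<noteq> d"
    "Y \<circ> inv' A = transpose p q" "p \<noteq> q" "C \<circ> inv' Y = transpose r s" "r \<noteq> s"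
    using bruhat_edge_label[OF AB] bruhat_edge_label[OF BC]
      bruhat_edge_label[OF AY] bruhat_edge_label[OF YC]
    unfolding transpositions_def by blast
  moreover have "(C \<circ> inv' Y) \<circ> (Y \<circ> inv' A) = (C \<circ> inv' B) \<circ> (B \<circ> inv' A)"
    using AY AB comp_inv_comp_cancel unfolding bruhat_edge_def by metis
  ultimately show ?thesis
    using transpose_factors_in_triangle_closure bruhat_consecutive_labels_distinct[OF AB BC]
    by metis
qed

lemma set_path_labels_flip_at:
  assumes "flip_at n i xs ys"
  shows "set (path_labels ys) \<subseteq> triangle_closure (set (path_labels xs))"
proof -
  obtain y where ys: "ys = xs[i := y]" and i: "1 \<le> i" "i + 1 < length xs"
    and xs_path: "bruhat_path n xs" and ys_path: "bruhat_path n ys"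
    using assms unfolding flip_at_def by blast
  define A B C where "A = xs ! (i - 1)" and "B = xs ! i" and "C = xs ! (i + 1)"
  have edge: "bruhat_edge n (zs ! (i - 1)) (zs ! i)" "bruhat_edge n (zs ! i) (zs ! (i + 1))"
    if "bruhat_path n zs" "length zs = length xs" for zs
    using that i unfolding bruhat_path_def by (metis add.commute le_add_diff_inverse add_lessD1)+
  have "ys ! (i - 1) = A" "ys ! i = y" "ys ! (i + 1) = C"
    using i unfolding ys A_def C_def by auto
  then have "bruhat_edge n A B" "bruhat_edge n B C" "bruhat_edge n A y" "bruhat_edge n y C"
    using edge[OF xs_path] edge[OF ys_path] ys unfolding A_def B_def C_def by auto
  then have "{y \<circ> inv' A, C \<circ> inv' y} \<subseteq> triangle_closure {B \<circ> inv' A, C \<circ> inv' B}"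
    by (rule bruhat_square_labels_in_triangle_closure)
  also have "\<dots> \<subseteq> triangle_closure (set (path_labels xs))"
  proof (rule triangle_closure_mono)
    have "path_labels xs ! (i - 1) = B \<circ> inv' A" "path_labels xs ! i = C \<circ> inv' B"
      using i by (simp_all add: nth_path_labels A_def B_def C_def)
    moreover have "i - 1 < length (path_labels xs)" "i < length (path_labels xs)"
      using i by (simp_all add: length_path_labels)
    ultimately show "{B \<circ> inv' A, C \<circ> inv' B} \<subseteq> set (path_labels xs)"
      by (metis empty_subsetI insert_subset nth_mem)
  qed
  finally show ?thesis
    using set_path_labels_list_update[OF i, of y] unfolding ys A_def C_def triangle_closure_def
    by blast
qed

lemma flip_at_sym:
  assumes "flip_at n i xs ys"
  shows "flip_at n i ys xs"
proof -
  obtain y where y: "y \<noteq> xs ! i" "ys = xs[i := y]" and i: "1 \<le> i" "i + 1 < length xs"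
    and paths: "bruhat_path n xs" "bruhat_path n ys"
    using assms unfolding flip_at_def by blast
  have "xs ! i \<noteq> ys ! i" "ys[i := xs ! i] = xs" "i + 1 < length ys"
    using y i by auto
  then show ?thesis
    unfolding flip_at_def using i paths by (intro conjI exI[of _ "xs ! i"]) simp_all
qed

lemma flip_at_invariants_subset:
  assumes "flip_at n i xs ys"
  shows "W_group n ys \<subseteq> W_group n xs" "G_vertices n ys \<subseteq> G_vertices n xs"
    "(G_adj ys)\<^sup>* \<subseteq> (G_adj xs)\<^sup>*"
proof -
  have closure: "set (path_labels ys) \<subseteq> triangle_closure (set (path_labels xs))"
    using assms by (rule set_path_labels_flip_at)
  have "bruhat_path n xs"
    using assms unfolding flip_at_def by simp
  then have "set (path_labels xs) \<subseteq> carrier (sym_group n)"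
    using path_labels_subset_transpositions transpositions_subset_carrier by blast
  then show "W_group n ys \<subseteq> W_group n xs"
    unfolding W_group_def using closure by (rule generate_triangle_closure_subset)
  have "\<exists>t'\<in>set (path_labels xs). t' a \<noteq> a" if "t \<in> set (path_labels ys)" "t a \<noteq> a" for a t
    using triangle_closure_moved_point[OF subsetD[OF closure that(1)] that(2)] .
  then show "G_vertices n ys \<subseteq> G_vertices n xs"
    unfolding G_vertices_def by blast
  have "G_adj ys \<subseteq> transposition_graph (triangle_closure (set (path_labels xs)))"
    unfolding G_adj_eq_transposition_graph using closure by (rule transposition_graph_mono)
  also have "\<dots> \<subseteq> (G_adj xs)\<^sup>*"
    unfolding G_adj_eq_transposition_graph by (rule transposition_graph_triangle_closure)
  finally show "(G_adj ys)\<^sup>* \<subseteq> (G_adj xs)\<^sup>*"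
    by (rule rtrancl_subset_rtrancl)
qed

lemma flip_step_invariants:
  assumes "flip_step n xs ys"
  shows "W_group n xs = W_group n ys \<and> G_vertices n xs = G_vertices n ys
    \<and> (G_adj xs)\<^sup>* = (G_adj ys)\<^sup>*"
proof -
  obtain i where "flip_at n i xs ys"
    using assms unfolding flip_step_def by blast
  then show ?thesis
    using flip_at_invariants_subset[of n i xs ys] flip_at_invariants_subset[OF flip_at_sym, of n i xs ys]
    by (intro conjI subset_antisym)
qed

theorem lemma6p1:
  fixes n :: nat and \<Gamma> \<Gamma>' :: "(nat \<Rightarrow> nat) list"
  assumes "same_flipclass n \<Gamma> \<Gamma>'"
  shows "W_group n \<Gamma> = W_group n \<Gamma>'
    \<and> G_vertices n \<Gamma> = G_vertices n \<Gamma>'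
    \<and> G_num_components n \<Gamma> = G_num_components n \<Gamma>'"
proof -
  have "(flip_step n)\<^sup>*\<^sup>* \<Gamma> \<Gamma>'"
    using assms unfolding same_flipclass_def by blast
  then have "W_group n \<Gamma> = W_group n \<Gamma>' \<and> G_vertices n \<Gamma> = G_vertices n \<Gamma>'
      \<and> (G_adj \<Gamma>)\<^sup>* = (G_adj \<Gamma>')\<^sup>*"
  proof (induction rule: rtranclp_induct)
    case (step ys zs)
    then show ?case using flip_step_invariants[OF step.hyps(2)] by simp
  qed simp
  then show ?thesis
    unfolding G_num_components_def G_components_def by simp
qed

end
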